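(* There is an absolute constant $C$ such that for every $n\geq 1$, every $w\in\{0,1\}^n$ and every binary string $w'\neq w$ of any length $\geq 1$, there is a prenex first-order sentence over $\tau_{\mathsf{string}}$ with at most $\log_2(n)+C$ quantifiers, whose quantifier prefix strictly alternates and ends with $\forall$, that is true in $\mathbf{B}_w$ and false in $\mathbf{B}_{w'}$.
   Context: Vocabulary $\tau_{\mathsf{string}}=\langle <, S;\ \mathsf{min},\mathsf{max}\rangle$ with $<$ binary, $S$ unary, $\mathsf{min},\mathsf{max}$ constants. A string $w=w_1\cdots w_n\in\{0,1\}^n$ ($n\geq 1$) is encoded by the structure $\mathbf{B}_w$ with universe $\{1,\dots,n\}$, $<$ the usual order, $S=\{i: w_i=1\}$, $\mathsf{min}=1$, $\mathsf{max}=n$. The number of quantifiers is the number of quantifier occurrences. *)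

theory Defs
  imports Complex_Main
begin

text \<open>Binary strings are bool lists; the structure B_w has universe {1..length w},
  the usual order, S = {i. w_i = 1} (i.e. w ! (i-1) = True), min = 1, max = length w.\<close>

datatype trm = Var nat | Min | Max

datatype form =
    Less trm trm
  | SAt trm
  | Eq trm trm
  | Neg form
  | Conj form form
  | Disj form form
  | Ex nat form
  | All nat form

fun tval :: "bool list \<Rightarrow> (nat \<Rightarrow> nat) \<Rightarrow> trm \<Rightarrow> nat" where
  "tval w e (Var x) = e x"
| "tval w e Min = 1"
| "tval w e Max = length w"

fun sat :: "bool list \<Rightarrow> (nat \<Rightarrow> nat) \<Rightarrow> form \<Rightarrow> bool" where
  "sat w e (Less s t) = (tval w e s < tval w e t)"
| "sat w e (SAt t) = (w ! (tval w e t - 1))"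
| "sat w e (Eq s t) = (tval w e s = tval w e t)"
| "sat w e (Neg f) = (\<not> sat w e f)"
| "sat w e (Conj f g) = (sat w e f \<and> sat w e g)"
| "sat w e (Disj f g) = (sat w e f \<or> sat w e g)"
| "sat w e (Ex x f) = (\<exists>i\<in>{1..length w}. sat w (e(x := i)) f)"
| "sat w e (All x f) = (\<forall>i\<in>{1..length w}. sat w (e(x := i)) f)"

fun tvars :: "trm \<Rightarrow> nat set" where
  "tvars (Var x) = {x}"
| "tvars Min = {}"
| "tvars Max = {}"

fun free_vars :: "form \<Rightarrow> nat set" where
  "free_vars (Less s t) = tvars s \<union> tvars t"
| "free_vars (SAt t) = tvars t"
| "free_vars (Eq s t) = tvars s \<union> tvars t"
| "free_vars (Neg f) = free_vars f"
| "free_vars (Conj f g) = free_vars f \<union> free_vars g"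
| "free_vars (Disj f g) = free_vars f \<union> free_vars g"
| "free_vars (Ex x f) = free_vars f - {x}"
| "free_vars (All x f) = free_vars f - {x}"

definition sentence :: "form \<Rightarrow> bool" where
  "sentence f \<longleftrightarrow> free_vars f = {}"

text \<open>Truth of a sentence in B_w (the assignment is irrelevant for sentences).\<close>
definition models :: "bool list \<Rightarrow> form \<Rightarrow> bool" where
  "models w f \<longleftrightarrow> sat w (\<lambda>_. 1) f"

fun qcount :: "form \<Rightarrow> nat" where
  "qcount (Less s t) = 0"
| "qcount (SAt t) = 0"
| "qcount (Eq s t) = 0"
| "qcount (Neg f) = qcount f"
| "qcount (Conj f g) = qcount f + qcount g"
| "qcount (Disj f g) = qcount f + qcount g"
| "qcount (Ex x f) = Suc (qcount f)"
| "qcount (All x f) = Suc (qcount f)"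

definition quantifier_free :: "form \<Rightarrow> bool" where
  "quantifier_free f \<longleftrightarrow> qcount f = 0"

datatype quant = QEx | QAll

fun qprefix :: "form \<Rightarrow> quant list" where
  "qprefix (Ex x f) = QEx # qprefix f"
| "qprefix (All x f) = QAll # qprefix f"
| "qprefix _ = []"

fun matrix :: "form \<Rightarrow> form" where
  "matrix (Ex x f) = matrix f"
| "matrix (All x f) = matrix f"
| "matrix f = f"

definition prenex :: "form \<Rightarrow> bool" where
  "prenex f \<longleftrightarrow> quantifier_free (matrix f)"

definition strictly_alternating :: "quant list \<Rightarrow> bool" where
  "strictly_alternating qs \<longleftrightarrow> (\<forall>i. Suc i < length qs \<longrightarrow> qs ! i \<noteq> qs ! Suc i)"

end

theory Submission
  imports Defs
begin

text \<open>
  With \<open>m\<close> alternating quantifiers one can bound gaps between positions up to about \<open>2\<^sup>m\<close>: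
  a disjunction \<open>u \<le> a + h \<or> b \<le> u + g\<close> holds iff some point \<open>x\<close> splits the relevant gap
  into two halves obeying a conjunctive bound, and a conjunction \<open>y \<le> a + h \<and> b \<le> y + g\<close>
  holds iff every point \<open>x\<close> obeys a disjunctive bound with halved gaps. Guessing \<open>x\<close>
  existentially, respectively checking it universally, with one fresh variable per level, all
  these formulas share one alternating quantifier prefix and so are prenex. Depth \<open>log\<^sub>2 n + 4\<close>
  therefore suffices to say ``the length is at most \<open>n\<close>'' (separating \<open>w\<close> from longer strings)
  or its negation (shorter strings); one more existential quantifier picks the position
  \<open>i + 1\<close> where a string of the same length differs from \<open>w\<close> and checks its letter.
\<close>

section \<open>Alternating quantifier blocks\<close>

definition true_form :: form where
  "true_form = Eq Min Min"

definition false_form :: form where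
  "false_form = Neg true_form"

definition form_if :: "form \<Rightarrow> form \<Rightarrow> form \<Rightarrow> form" where
  "form_if G A B = Disj (Conj G A) (Conj (Neg G) B)"

fun alt_block :: "nat \<Rightarrow> bool \<Rightarrow> form \<Rightarrow> form" where
  "alt_block 0 q M = M"
| "alt_block (Suc m) q M = (if q then All m (alt_block m False M) else Ex m (alt_block m True M))"

definition alt_forall_sentence :: "form \<Rightarrow> bool" where
  "alt_forall_sentence \<phi> \<longleftrightarrow> sentence \<phi> \<and> prenex \<phi> \<and> strictly_alternating (qprefix \<phi>) \<and>
     qprefix \<phi> \<noteq> [] \<and> last (qprefix \<phi>) = QAll"

lemma tval_cong: "(\<And>x. x \<in> tvars t \<Longrightarrow> e x = e' x) \<Longrightarrow> tval w e t = tval w e' t"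
  by (cases t) auto

lemma sat_cong: "(\<And>x. x \<in> free_vars f \<Longrightarrow> e x = e' x) \<Longrightarrow> sat w e f = sat w e' f"
proof (induction f arbitrary: e e')
  case (Less s t)
  have "tval w e s = tval w e' s" "tval w e t = tval w e' t"
    by (rule tval_cong; use Less.prems in auto)+
  then show ?case by simp
next
  case (SAt t)
  have "tval w e t = tval w e' t"
    by (rule tval_cong) (use SAt.prems in auto)
  then show ?case by simp
next
  case (Eq s t)
  have "tval w e s = tval w e' s" "tval w e t = tval w e' t"
    by (rule tval_cong; use Eq.prems in auto)+
  then show ?case by simp
next
  case (Neg f)
  have "sat w e f = sat w e' f"
    by (rule Neg.IH) (use Neg.prems in auto)
  then show ?case by simp
next
  case (Conj f g)
  have "sat w e f = sat w e' f" "sat w e g = sat w e' g"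
    by (rule Conj.IH; use Conj.prems in auto)+
  then show ?case by simp
next
  case (Disj f g)
  have "sat w e f = sat w e' f" "sat w e g = sat w e' g"
    by (rule Disj.IH; use Disj.prems in auto)+
  then show ?case by simp
next
  case (Ex x f)
  have "sat w (e(x := i)) f = sat w (e'(x := i)) f" for i
    by (rule Ex.IH) (use Ex.prems in auto)
  then show ?case by simp
next
  case (All x f)
  have "sat w (e(x := i)) f = sat w (e'(x := i)) f" for i
    by (rule All.IH) (use All.prems in auto)
  then show ?case by simp
qed

lemma tval_fun_upd_notin: "x \<notin> tvars t \<Longrightarrow> tval w (e(x := i)) t = tval w e t"
  by (rule tval_cong) auto

lemma sat_fun_upd_notin: "x \<notin> free_vars f \<Longrightarrow> sat w (e(x := i)) f = sat w e f"
  by (rule sat_cong) auto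

lemma sat_alt_block_vacuous:
  assumes "free_vars M \<inter> {..<m} = {}" "length w \<ge> 1"
  shows "sat w e (alt_block m q M) = sat w e M"
  using assms(1)
proof (induction m arbitrary: q e)
  case (Suc m)
  then have "free_vars M \<inter> {..<m} = {}"
    by auto
  note IH = Suc.IH[OF this]
  have upd: "\<And>i. sat w (e(m := i)) M = sat w e M"
    using Suc.prems by (intro sat_fun_upd_notin) auto
  have "\<exists>i\<ge>1. i \<le> length w"
    using assms(2) by blast
  then show ?case
    by (cases q) (simp_all add: IH upd del: fun_upd_apply)
qed simp

lemma sat_alt_block_form_if:
  assumes "free_vars G \<inter> {..<m} = {}"
  shows "sat w e (alt_block m q (form_if G A B)) =
           (if sat w e G then sat w e (alt_block m q A) else sat w e (alt_block m q B))"
  using assms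
proof (induction m arbitrary: q e)
  case (Suc m)
  then have "free_vars G \<inter> {..<m} = {}"
    by auto
  note IH = Suc.IH[OF this]
  have upd: "\<And>i. sat w (e(m := i)) G = sat w e G"
    using Suc.prems by (intro sat_fun_upd_notin) auto
  show ?case
    by (cases q) (simp_all add: IH upd del: fun_upd_apply)
qed (simp add: form_if_def)

lemma sat_alt_block_Neg: "sat w e (alt_block m q (Neg M)) = (\<not> sat w e (alt_block m (\<not> q) M))"
  by (induction m arbitrary: q e) auto

lemma qcount_alt_block: "qcount (alt_block m q M) = m + qcount M"
  by (induction m arbitrary: q) auto

lemma free_vars_alt_block: "free_vars (alt_block m q M) = free_vars M - {..<m}"
  by (induction m arbitrary: q) auto

lemma matrix_alt_block: "matrix (alt_block m q M) = matrix M"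
  by (induction m arbitrary: q) auto

lemma qprefix_alt_block:
  "qprefix M = [] \<Longrightarrow> qprefix (alt_block m q M) = map (\<lambda>i. if even i = q then QAll else QEx) [0..<m]"
  by (induction m arbitrary: q) (simp_all add: map_upt_Suc del: upt_Suc)

lemma strictly_alternating_parity: "strictly_alternating (map (\<lambda>i. if even i = q then QAll else QEx) [0..<m])"
  by (simp add: strictly_alternating_def nth_map_upt)

lemma alt_forall_sentence_alt_block:
  assumes "qcount M = 0" "free_vars M \<subseteq> {..<m}" "0 < m"
  shows "alt_forall_sentence (alt_block m (odd m) M)"
proof -
  have "qprefix M = []" "matrix M = M"
    using assms(1) by (cases M; simp)+
  then have prefix: "qprefix (alt_block m (odd m) M) = map (\<lambda>i. if even i = odd m then QAll else QEx) [0..<m]"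
    by (intro qprefix_alt_block)
  have "last [0..<m] = m - 1" "[0..<m] \<noteq> []"
    using assms(3) by simp_all
  then have "last (qprefix (alt_block m (odd m) M)) = QAll"
    unfolding prefix last_map[OF \<open>[0..<m] \<noteq> []\<close>] using assms(3) by simp
  moreover have "sentence (alt_block m (odd m) M)"
    using assms by (auto simp: sentence_def free_vars_alt_block)
  moreover have "prenex (alt_block m (odd m) M)"
    using assms \<open>matrix M = M\<close> by (simp add: prenex_def quantifier_free_def matrix_alt_block)
  ultimately show ?thesis
    using assms(3) unfolding alt_forall_sentence_def prefix by (simp add: strictly_alternating_parity)
qed

section \<open>Gap formulas\<close>

definition vars_from :: "nat \<Rightarrow> trm \<Rightarrow> bool" where
  "vars_from m t \<longleftrightarrow> (\<forall>j\<in>tvars t. m \<le> j)"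

definition in_universe :: "bool list \<Rightarrow> (nat \<Rightarrow> nat) \<Rightarrow> trm \<Rightarrow> bool" where
  "in_universe w e t \<longleftrightarrow> tval w e t \<in> {1..length w}"

fun max_gap_or :: "nat \<Rightarrow> nat" and max_gap_and :: "nat \<Rightarrow> nat" where
  "max_gap_or 0 = 0"
| "max_gap_or (Suc m) = 2 * max_gap_and m"
| "max_gap_and 0 = 0"
| "max_gap_and (Suc m) = 2 * max_gap_or m + 1"

fun gap_or :: "nat \<Rightarrow> trm \<Rightarrow> trm \<Rightarrow> trm \<Rightarrow> nat \<Rightarrow> nat \<Rightarrow> form"
and gap_and :: "nat \<Rightarrow> trm \<Rightarrow> trm \<Rightarrow> trm \<Rightarrow> nat \<Rightarrow> nat \<Rightarrow> form" where
  "gap_or 0 a u b h g = Disj (Neg (Less a u)) (Neg (Less u b))"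
| "gap_or (Suc m) a u b h g =
     \<comment> \<open>if \<open>u < b\<close>, a midpoint above \<open>u\<close> exists in the universe\<close>
     form_if (Neg (Less u b)) true_form
       (form_if (Neg (Less u (Var m)))
          (gap_and m a (Var m) u (h div 2) (h - h div 2))
          (gap_and m u (Var m) b (g - g div 2) (g div 2)))"
| "gap_and 0 a y b h g = Conj (Neg (Less a y)) (Neg (Less y b))"
| "gap_and (Suc m) a y b h g =
     form_if (Neg (Less y (Var m)))
       (if h = 0 then Neg (Less a y) else gap_or m a (Var m) y ((h - 1) div 2) (h - 1 - (h - 1) div 2))
       (if g = 0 then Neg (Less y b) else gap_or m y (Var m) b ((g - 1) div 2) (g - 1 - (g - 1) div 2))"

definition gap_or_correct :: "bool list \<Rightarrow> nat \<Rightarrow> bool" where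
  "gap_or_correct w m \<longleftrightarrow> (\<forall>a u b h g e. h \<le> max_gap_or m \<longrightarrow> g \<le> max_gap_or m \<longrightarrow>
     vars_from m a \<longrightarrow> vars_from m u \<longrightarrow> vars_from m b \<longrightarrow>
     in_universe w e a \<longrightarrow> in_universe w e u \<longrightarrow> in_universe w e b \<longrightarrow>
     (sat w e (alt_block m False (gap_or m a u b h g)) \<longleftrightarrow>
        tval w e u \<le> tval w e a + h \<or> tval w e b \<le> tval w e u + g))"

definition gap_and_correct :: "bool list \<Rightarrow> nat \<Rightarrow> bool" where
  "gap_and_correct w m \<longleftrightarrow> (\<forall>a y b h g e. h \<le> max_gap_and m \<longrightarrow> g \<le> max_gap_and m \<longrightarrow>
     vars_from m a \<longrightarrow> vars_from m y \<longrightarrow> vars_from m b \<longrightarrow>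
     in_universe w e a \<longrightarrow> in_universe w e y \<longrightarrow> in_universe w e b \<longrightarrow>
     (sat w e (alt_block m True (gap_and m a y b h g)) \<longleftrightarrow>
        tval w e y \<le> tval w e a + h \<and> tval w e b \<le> tval w e y + g))"

lemma qcount_gap_or_gap_and: "qcount (gap_or m a u b h g) = 0 \<and> qcount (gap_and m a u b h g) = 0"
  by (induction m arbitrary: a u b h g) (simp_all add: form_if_def true_form_def)

lemma free_vars_gap_or_gap_and:
  "free_vars (gap_or m a u b h g) \<subseteq> tvars a \<union> tvars u \<union> tvars b \<union> {..<m} \<and>
   free_vars (gap_and m a u b h g) \<subseteq> tvars a \<union> tvars u \<union> tvars b \<union> {..<m}"
proof (induction m arbitrary: a u b h g)
  case (Suc m)
  have or_IH: "\<And>a u b h g. free_vars (gap_or m a u b h g) \<subseteq> tvars a \<union> tvars u \<union> tvars b \<union> {..<m}"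
    and and_IH: "\<And>a u b h g. free_vars (gap_and m a u b h g) \<subseteq> tvars a \<union> tvars u \<union> tvars b \<union> {..<m}"
    using Suc.IH by blast+
  have "free_vars (gap_or (Suc m) a u b h g) \<subseteq> tvars a \<union> tvars u \<union> tvars b \<union> {..<Suc m}"
    using and_IH[of a "Var m" u] and_IH[of u "Var m" b]
    by (simp add: form_if_def true_form_def lessThan_Suc) blast
  moreover have "free_vars (gap_and (Suc m) a u b h g) \<subseteq> tvars a \<union> tvars u \<union> tvars b \<union> {..<Suc m}"
    using or_IH[of a "Var m" u] or_IH[of u "Var m" b]
    by (simp add: form_if_def lessThan_Suc) blast
  ultimately show ?case ..
qed auto

lemma ex_midpoint_iff:
  fixes A U B n h g :: nat
  assumes "A \<in> {1..n}" "U \<in> {1..n}" "B \<in> {1..n}"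
  shows "(\<exists>i\<in>{1..n}. B \<le> U \<or> (if i \<le> U then i \<le> A + h div 2 \<and> U \<le> i + (h - h div 2)
                                  else i \<le> U + (g - g div 2) \<and> B \<le> i + g div 2))
         \<longleftrightarrow> U \<le> A + h \<or> B \<le> U + g"
proof
  assume "U \<le> A + h \<or> B \<le> U + g"
  then consider "U \<le> A + h" | "B \<le> U + g"
    by blast
  then show "\<exists>i\<in>{1..n}. B \<le> U \<or> (if i \<le> U then i \<le> A + h div 2 \<and> U \<le> i + (h - h div 2)
                                  else i \<le> U + (g - g div 2) \<and> B \<le> i + g div 2)"
  proof cases
    case 1
    then show ?thesis
      using assms by (intro bexI[of _ "min U (A + h div 2)"]) auto
  next
    case 2
    then show ?thesis
      using assms by (intro bexI[of _ "min B (U + (g - g div 2))"]) auto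
  qed
qed (auto split: if_splits)

lemma all_midpoints_iff:
  fixes A Y B n h g :: nat
  assumes "A \<in> {1..n}" "Y \<in> {1..n}" "B \<in> {1..n}"
  shows "(\<forall>i\<in>{1..n}. if i \<le> Y
            then (if h = 0 then Y \<le> A else i \<le> A + (h - 1) div 2 \<or> Y \<le> i + (h - 1 - (h - 1) div 2))
            else (if g = 0 then B \<le> Y else i \<le> Y + (g - 1) div 2 \<or> B \<le> i + (g - 1 - (g - 1) div 2)))
         \<longleftrightarrow> Y \<le> A + h \<and> B \<le> Y + g" (is "(\<forall>i\<in>_. ?P i) \<longleftrightarrow> _")
proof
  assume all: "\<forall>i\<in>{1..n}. ?P i"
  show "Y \<le> A + h \<and> B \<le> Y + g"
  proof (rule ccontr)
    assume "\<not> (Y \<le> A + h \<and> B \<le> Y + g)"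
    then consider "A + h < Y" | "Y + g < B"
      by linarith
    then show False
    proof cases
      case 1
      show False
      proof (cases "h = 0")
        case True
        then show False using 1 all assms by (auto dest!: bspec[of _ _ 1])
      next
        case False
        have "?P (A + (h - 1) div 2 + 1)"
          by (rule bspec[OF all]) (use 1 assms in auto)
        then show False using 1 False by (simp split: if_splits)
      qed
    next
      case 2
      show False
      proof (cases "g = 0")
        case True
        then show False using 2 all assms by (auto dest!: bspec[of _ _ B])
      next
        case False
        have "?P (Y + (g - 1) div 2 + 1)"
          by (rule bspec[OF all]) (use 2 assms in auto)
        then show False using 2 False by (simp split: if_splits)
      qed
    qed
  qed
qed auto

lemma tval_fun_upd_vars_from: "vars_from (Suc m) t \<Longrightarrow> tval w (e(m := i)) t = tval w e t"
  by (rule tval_fun_upd_notin) (auto simp: vars_from_def)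

lemma gap_or_correct_Suc:
  assumes "gap_and_correct w m" and len: "length w \<ge> 1"
  shows "gap_or_correct w (Suc m)"
  unfolding gap_or_correct_def
proof (intro allI impI)
  fix a u b h g e
  assume h: "h \<le> max_gap_or (Suc m)" and g: "g \<le> max_gap_or (Suc m)"
    and vars: "vars_from (Suc m) a" "vars_from (Suc m) u" "vars_from (Suc m) b"
    and univ: "in_universe w e a" "in_universe w e u" "in_universe w e b"
  note and_IH = assms(1)[unfolded gap_and_correct_def, rule_format]
  define A U B where "A = tval w e a" and "U = tval w e u" and "B = tval w e b"
  define M where "M = form_if (Neg (Less u b)) true_form
       (form_if (Neg (Less u (Var m)))
          (gap_and m a (Var m) u (h div 2) (h - h div 2))
          (gap_and m u (Var m) b (g - g div 2) (g div 2)))"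
  have vars_m: "vars_from m a" "vars_from m u" "vars_from m b" "vars_from m (Var m)"
    using vars by (auto simp: vars_from_def)
  have fixed: "tval w (e(m := i)) a = A" "tval w (e(m := i)) u = U" "tval w (e(m := i)) b = B" for i
    using vars by (simp_all add: A_def U_def B_def tval_fun_upd_vars_from)
  have univ_upd: "in_universe w (e(m := i)) t" if "vars_from (Suc m) t" "in_universe w e t" for t i
    using that by (simp add: in_universe_def tval_fun_upd_vars_from)
  have "sat w (e(m := i)) (alt_block m True M) \<longleftrightarrow>
          B \<le> U \<or> (if i \<le> U then i \<le> A + h div 2 \<and> U \<le> i + (h - h div 2)
                   else i \<le> U + (g - g div 2) \<and> B \<le> i + g div 2)"
    if i: "i \<in> {1..length w}" for i
  proof -
    have univ_i: "in_universe w (e(m := i)) (Var m)"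
      using i by (simp add: in_universe_def)
    have "sat w (e(m := i)) (alt_block m True (gap_and m a (Var m) u (h div 2) (h - h div 2)))
            \<longleftrightarrow> i \<le> A + h div 2 \<and> U \<le> i + (h - h div 2)"
      using and_IH[OF _ _ vars_m(1,4,2) univ_upd[OF vars(1) univ(1)] univ_i univ_upd[OF vars(2) univ(2)]]
        h fixed by simp
    moreover have "sat w (e(m := i)) (alt_block m True (gap_and m u (Var m) b (g - g div 2) (g div 2)))
            \<longleftrightarrow> i \<le> U + (g - g div 2) \<and> B \<le> i + g div 2"
      using and_IH[OF _ _ vars_m(2,4,3) univ_upd[OF vars(2) univ(2)] univ_i univ_upd[OF vars(3) univ(3)]]
        g fixed by simp
    moreover have "free_vars (Neg (Less u b)) \<inter> {..<m} = {}" "free_vars (Neg (Less u (Var m))) \<inter> {..<m} = {}"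
        "free_vars true_form \<inter> {..<m} = {}"
      using vars_m by (auto simp: vars_from_def true_form_def)
    ultimately show ?thesis
      using len unfolding M_def
      by (simp add: sat_alt_block_form_if sat_alt_block_vacuous fixed not_less true_form_def fun_upd_same del: fun_upd_apply)
  qed
  then have "sat w e (alt_block (Suc m) False (gap_or (Suc m) a u b h g)) \<longleftrightarrow>
      (\<exists>i\<in>{1..length w}. B \<le> U \<or> (if i \<le> U then i \<le> A + h div 2 \<and> U \<le> i + (h - h div 2)
                                    else i \<le> U + (g - g div 2) \<and> B \<le> i + g div 2))"
    by (simp add: M_def del: fun_upd_apply)
  also have "\<dots> \<longleftrightarrow> U \<le> A + h \<or> B \<le> U + g"
    using univ by (intro ex_midpoint_iff) (simp_all add: in_universe_def A_def U_def B_def)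
  finally show "sat w e (alt_block (Suc m) False (gap_or (Suc m) a u b h g)) \<longleftrightarrow>
          tval w e u \<le> tval w e a + h \<or> tval w e b \<le> tval w e u + g"
    by (simp add: A_def U_def B_def)
qed

lemma gap_and_correct_Suc:
  assumes "gap_or_correct w m" and len: "length w \<ge> 1"
  shows "gap_and_correct w (Suc m)"
  unfolding gap_and_correct_def
proof (intro allI impI)
  fix a y b h g e
  assume h: "h \<le> max_gap_and (Suc m)" and g: "g \<le> max_gap_and (Suc m)"
    and vars: "vars_from (Suc m) a" "vars_from (Suc m) y" "vars_from (Suc m) b"
    and univ: "in_universe w e a" "in_universe w e y" "in_universe w e b"
  note or_IH = assms(1)[unfolded gap_or_correct_def, rule_format]
  define A Y B where "A = tval w e a" and "Y = tval w e y" and "B = tval w e b"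
  define M where "M = form_if (Neg (Less y (Var m)))
       (if h = 0 then Neg (Less a y) else gap_or m a (Var m) y ((h - 1) div 2) (h - 1 - (h - 1) div 2))
       (if g = 0 then Neg (Less y b) else gap_or m y (Var m) b ((g - 1) div 2) (g - 1 - (g - 1) div 2))"
  have vars_m: "vars_from m a" "vars_from m y" "vars_from m b" "vars_from m (Var m)"
    using vars by (auto simp: vars_from_def)
  have fixed: "tval w (e(m := i)) a = A" "tval w (e(m := i)) y = Y" "tval w (e(m := i)) b = B" for i
    using vars by (simp_all add: A_def Y_def B_def tval_fun_upd_vars_from)
  have univ_upd: "in_universe w (e(m := i)) t" if "vars_from (Suc m) t" "in_universe w e t" for t i
    using that by (simp add: in_universe_def tval_fun_upd_vars_from)
  have "sat w (e(m := i)) (alt_block m False M) \<longleftrightarrow>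
          (if i \<le> Y
           then (if h = 0 then Y \<le> A else i \<le> A + (h - 1) div 2 \<or> Y \<le> i + (h - 1 - (h - 1) div 2))
           else (if g = 0 then B \<le> Y else i \<le> Y + (g - 1) div 2 \<or> B \<le> i + (g - 1 - (g - 1) div 2)))"
    if i: "i \<in> {1..length w}" for i
  proof -
    have univ_i: "in_universe w (e(m := i)) (Var m)"
      using i by (simp add: in_universe_def)
    have "sat w (e(m := i)) (alt_block m False (gap_or m a (Var m) y ((h - 1) div 2) (h - 1 - (h - 1) div 2)))
            \<longleftrightarrow> i \<le> A + (h - 1) div 2 \<or> Y \<le> i + (h - 1 - (h - 1) div 2)"
      using or_IH[OF _ _ vars_m(1,4,2) univ_upd[OF vars(1) univ(1)] univ_i univ_upd[OF vars(2) univ(2)]]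
        h fixed by simp
    moreover have "sat w (e(m := i)) (alt_block m False (gap_or m y (Var m) b ((g - 1) div 2) (g - 1 - (g - 1) div 2)))
            \<longleftrightarrow> i \<le> Y + (g - 1) div 2 \<or> B \<le> i + (g - 1 - (g - 1) div 2)"
      using or_IH[OF _ _ vars_m(2,4,3) univ_upd[OF vars(2) univ(2)] univ_i univ_upd[OF vars(3) univ(3)]]
        g fixed by simp
    moreover have "free_vars (Neg (Less y (Var m))) \<inter> {..<m} = {}"
        "free_vars (Neg (Less a y)) \<inter> {..<m} = {}" "free_vars (Neg (Less y b)) \<inter> {..<m} = {}"
      using vars_m by (auto simp: vars_from_def)
    ultimately show ?thesis
      using len unfolding M_def
      by (simp add: sat_alt_block_form_if sat_alt_block_vacuous fixed not_less fun_upd_same del: fun_upd_apply)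
  qed
  then have "sat w e (alt_block (Suc m) True (gap_and (Suc m) a y b h g)) \<longleftrightarrow>
      (\<forall>i\<in>{1..length w}. if i \<le> Y
           then (if h = 0 then Y \<le> A else i \<le> A + (h - 1) div 2 \<or> Y \<le> i + (h - 1 - (h - 1) div 2))
           else (if g = 0 then B \<le> Y else i \<le> Y + (g - 1) div 2 \<or> B \<le> i + (g - 1 - (g - 1) div 2)))"
    by (simp add: M_def del: fun_upd_apply)
  also have "\<dots> \<longleftrightarrow> Y \<le> A + h \<and> B \<le> Y + g"
    using univ by (intro all_midpoints_iff) (simp_all add: in_universe_def A_def Y_def B_def)
  finally show "sat w e (alt_block (Suc m) True (gap_and (Suc m) a y b h g)) \<longleftrightarrow>
          tval w e y \<le> tval w e a + h \<and> tval w e b \<le> tval w e y + g"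
    by (simp add: A_def Y_def B_def)
qed

lemma gap_or_and_correct: "length w \<ge> 1 \<Longrightarrow> gap_or_correct w m \<and> gap_and_correct w m"
proof (induction m)
  case 0
  then show ?case
    by (auto simp: gap_or_correct_def gap_and_correct_def)
next
  case (Suc m)
  then show ?case
    using gap_or_correct_Suc gap_and_correct_Suc by blast
qed

lemma sat_gap_and:
  assumes "length w \<ge> 1" "h \<le> max_gap_and m" "g \<le> max_gap_and m"
    and "vars_from m a" "vars_from m y" "vars_from m b"
    and "in_universe w e a" "in_universe w e y" "in_universe w e b"
  shows "sat w e (alt_block m True (gap_and m a y b h g)) \<longleftrightarrow>
           tval w e y \<le> tval w e a + h \<and> tval w e b \<le> tval w e y + g"
  using gap_or_and_correct[OF assms(1), of m] assms(2-) unfolding gap_and_correct_def by blast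

lemma power_two_le_max_gap: "2 ^ m \<le> 3 * max_gap_and m + 1 \<and> 2 ^ m \<le> 3 * max_gap_or m + 2"
  by (induction m) auto

lemma exists_depth_log:
  assumes "n \<ge> 1"
  shows "\<exists>m. odd m = p \<and> n \<le> max_gap_and m \<and> real m \<le> log 2 n + 4"
proof -
  obtain k where k: "2 ^ k \<le> n" "n < 2 ^ (k + 1)"
    using ex_power_ivl1[of 2 n] assms by auto
  define m where "m = (if odd (k + 3) = p then k + 3 else k + 4)"
  have "3 * n < 2 ^ (k + 3)"
    using k(2) by (simp add: power_add)
  also have "\<dots> \<le> 2 ^ m"
    by (simp add: m_def)
  finally have "n \<le> max_gap_and m"
    using power_two_le_max_gap[of m] by linarith
  moreover have "real m \<le> log 2 n + 4"
    using le_log2_of_power[OF k(1)] by (simp add: m_def)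
  ultimately show ?thesis
    by (intro exI[of _ m]) (simp add: m_def)
qed

section \<open>Separating sentences\<close>

definition length_at_most :: "nat \<Rightarrow> nat \<Rightarrow> form" where
  "length_at_most m k = alt_block m True (gap_and m Min Max Max k 0)"

lemma vars_from_Min_Max: "vars_from m Min" "vars_from m Max"
  by (simp_all add: vars_from_def)

lemma in_universe_Min_Max: "length w \<ge> 1 \<Longrightarrow> in_universe w e Min"
  "length w \<ge> 1 \<Longrightarrow> in_universe w e Max"
  by (simp_all add: in_universe_def)

lemma models_length_at_most:
  assumes "length v \<ge> 1" "k \<le> max_gap_and m"
  shows "models v (length_at_most m k) \<longleftrightarrow> length v \<le> Suc k"
  using sat_gap_and[OF assms(1,2) _ vars_from_Min_Max(1,2,2) in_universe_Min_Max[OF assms(1)]]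
  by (simp add: models_def length_at_most_def in_universe_Min_Max[OF assms(1)])

lemma alt_forall_sentence_gap_and:
  assumes "0 < m"
  shows "alt_forall_sentence (alt_block m (odd m) (gap_and m Min Max Max k 0))"
    "alt_forall_sentence (alt_block m (odd m) (Neg (gap_and m Min Max Max k 0)))"
  using alt_forall_sentence_alt_block[OF _ _ assms] qcount_gap_or_gap_and[of m Min Max Max k 0]
    free_vars_gap_or_gap_and[of m Min Max Max k 0] by simp_all

lemma separate_longer:
  assumes "1 \<le> length w" "length w < length w'"
  shows "\<exists>\<phi>. alt_forall_sentence \<phi> \<and> real (qcount \<phi>) \<le> log 2 (length w) + 4 \<and>
             models w \<phi> \<and> \<not> models w' \<phi>"
proof -
  obtain m where m: "odd m" "length w \<le> max_gap_and m" "real m \<le> log 2 (length w) + 4"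
    using exists_depth_log[OF assms(1), of True] by auto
  then have "0 < m" "length w - 1 \<le> max_gap_and m"
    using assms(1) by (auto intro: Nat.gr0I)
  define \<phi> where "\<phi> = length_at_most m (length w - 1)"
  have "models w \<phi>" "\<not> models w' \<phi>"
    using assms models_length_at_most[OF _ \<open>length w - 1 \<le> max_gap_and m\<close>] by (auto simp: \<phi>_def)
  moreover have "alt_forall_sentence \<phi>"
    using alt_forall_sentence_gap_and(1)[OF \<open>0 < m\<close>] m(1) by (simp add: \<phi>_def length_at_most_def)
  moreover have "qcount \<phi> = m"
    by (simp add: \<phi>_def length_at_most_def qcount_alt_block qcount_gap_or_gap_and)
  ultimately show ?thesis
    using m(3) by auto
qed

lemma separate_shorter:
  assumes "1 \<le> length w'" "length w' < length w"
  shows "\<exists>\<phi>. alt_forall_sentence \<phi> \<and> real (qcount \<phi>) \<le> log 2 (length w) + 4 \<and>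
             models w \<phi> \<and> \<not> models w' \<phi>"
proof -
  obtain m where m: "even m" "length w \<le> max_gap_and m" "real m \<le> log 2 (length w) + 4"
    using exists_depth_log[of "length w" False] assms by auto
  then have "0 < m" "length w - 2 \<le> max_gap_and m"
    using assms by (auto intro: Nat.gr0I)
  define \<phi> where "\<phi> = alt_block m False (Neg (gap_and m Min Max Max (length w - 2) 0))"
  have "models v \<phi> \<longleftrightarrow> \<not> models v (length_at_most m (length w - 2))" for v
    by (simp add: \<phi>_def models_def length_at_most_def sat_alt_block_Neg)
  then have "models w \<phi>" "\<not> models w' \<phi>"
    using assms models_length_at_most[OF _ \<open>length w - 2 \<le> max_gap_and m\<close>] by auto
  moreover have "alt_forall_sentence \<phi>"
    using alt_forall_sentence_gap_and(2)[OF \<open>0 < m\<close>] m(1) by (simp add: \<phi>_def)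
  moreover have "qcount \<phi> = m"
    by (simp add: \<phi>_def qcount_alt_block qcount_gap_or_gap_and)
  ultimately show ?thesis
    using m(3) by auto
qed

text \<open>\<open>x = i + 1\<close> is written as the gap bound \<open>x \<le> 1 + i \<and> n \<le> x + (n - 1 - i)\<close>.\<close>
definition letter_at :: "nat \<Rightarrow> nat \<Rightarrow> nat \<Rightarrow> bool \<Rightarrow> form" where
  "letter_at m n i c = alt_block (Suc m) False
     (form_if (if c then SAt (Var m) else Neg (SAt (Var m)))
        (gap_and m Min (Var m) Max i (n - 1 - i)) false_form)"

lemma models_letter_at:
  assumes "length v = n" "i < n" "n \<le> max_gap_and m"
  shows "models v (letter_at m n i c) \<longleftrightarrow> v ! i = c"
proof -
  define L where "L = (if c then SAt (Var m) else Neg (SAt (Var m)))"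
  have len: "length v \<ge> 1"
    using assms(1,2) by simp
  have "sat v ((\<lambda>_. 1)(m := x)) (alt_block m True (form_if L (gap_and m Min (Var m) Max i (n - 1 - i)) false_form))
          \<longleftrightarrow> x = Suc i \<and> v ! (x - 1) = c"
    if x: "x \<in> {1..n}" for x
  proof -
    have "sat v ((\<lambda>_. 1)(m := x)) (alt_block m True (gap_and m Min (Var m) Max i (n - 1 - i)))
            \<longleftrightarrow> x \<le> 1 + i \<and> n \<le> x + (n - 1 - i)"
      using sat_gap_and[OF len _ _ vars_from_Min_Max(1) _ vars_from_Min_Max(2) in_universe_Min_Max(1)[OF len]
          _ in_universe_Min_Max(2)[OF len]] assms x
      by (simp add: vars_from_def in_universe_def)
    also have "\<dots> \<longleftrightarrow> x = Suc i"
      using assms(2) by auto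
    finally have gap: "sat v ((\<lambda>_. 1)(m := x)) (alt_block m True (gap_and m Min (Var m) Max i (n - 1 - i)))
        \<longleftrightarrow> x = Suc i" .
    have "free_vars L \<inter> {..<m} = {}" "free_vars false_form \<inter> {..<m} = {}"
      by (auto simp: L_def false_form_def true_form_def)
    moreover have "sat v ((\<lambda>_. 1)(m := x)) L \<longleftrightarrow> v ! (x - 1) = c"
      by (cases c) (simp_all add: L_def)
    moreover have "\<not> sat v e false_form" for e
      by (simp add: false_form_def true_form_def)
    ultimately show ?thesis
      using len gap by (simp add: sat_alt_block_form_if sat_alt_block_vacuous del: fun_upd_apply)
  qed
  then show ?thesis
    using assms(1,2) by (auto simp: models_def letter_at_def L_def[symmetric] simp del: fun_upd_apply)
qed

lemma alt_forall_sentence_letter_at: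
  assumes "odd m"
  shows "alt_forall_sentence (letter_at m n i c)"
proof -
  define M where "M = form_if (if c then SAt (Var m) else Neg (SAt (Var m)))
        (gap_and m Min (Var m) Max i (n - 1 - i)) false_form"
  have "qcount M = 0"
    using qcount_gap_or_gap_and[of m Min "Var m" Max i "n - 1 - i"]
    by (simp add: M_def form_if_def false_form_def true_form_def)
  moreover have "free_vars M \<subseteq> {..<Suc m}"
    using free_vars_gap_or_gap_and[of m Min "Var m" Max i "n - 1 - i"]
    by (auto simp: M_def form_if_def false_form_def true_form_def)
  ultimately have "alt_forall_sentence (alt_block (Suc m) (odd (Suc m)) M)"
    by (intro alt_forall_sentence_alt_block) simp_all
  then show ?thesis
    using assms by (simp add: letter_at_def M_def)
qed

lemma separate_same_length:
  assumes "1 \<le> length w" "length w' = length w" "w' \<noteq> w"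
  shows "\<exists>\<phi>. alt_forall_sentence \<phi> \<and> real (qcount \<phi>) \<le> log 2 (length w) + 5 \<and>
             models w \<phi> \<and> \<not> models w' \<phi>"
proof -
  have "\<exists>i<length w. w' ! i \<noteq> w ! i"
    using assms(2,3) nth_equalityI[of w' w] by auto
  then obtain i where i: "i < length w" "w' ! i \<noteq> w ! i"
    by blast
  obtain m where m: "odd m" "length w \<le> max_gap_and m" "real m \<le> log 2 (length w) + 4"
    using exists_depth_log[OF assms(1), of True] by auto
  define \<phi> where "\<phi> = letter_at m (length w) i (w ! i)"
  have "models w \<phi>" "\<not> models w' \<phi>"
    using models_letter_at[OF _ i(1) m(2)] assms(2) i(2) by (simp_all add: \<phi>_def)
  moreover have "alt_forall_sentence \<phi>"
    using alt_forall_sentence_letter_at[OF m(1)] by (simp add: \<phi>_def)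
  moreover have "qcount \<phi> = Suc m"
    by (simp add: \<phi>_def letter_at_def qcount_alt_block qcount_gap_or_gap_and form_if_def
        false_form_def true_form_def)
  ultimately show ?thesis
    using m(3) by auto
qed

theorem mainTheorem8:
  shows "\<exists>C::real. \<forall>(w::bool list) (w'::bool list).
           length w \<ge> 1 \<longrightarrow> length w' \<ge> 1 \<longrightarrow> w' \<noteq> w \<longrightarrow>
           (\<exists>\<phi>. sentence \<phi> \<and> prenex \<phi> \<and>
                 real (qcount \<phi>) \<le> log 2 (real (length w)) + C \<and>
                 strictly_alternating (qprefix \<phi>) \<and>
                 qprefix \<phi> \<noteq> [] \<and> last (qprefix \<phi>) = QAll \<and>
                 models w \<phi> \<and> \<not> models w' \<phi>)"
proof (intro exI[of _ 5] allI impI)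
  fix w w' :: "bool list"
  assume len: "length w \<ge> 1" "length w' \<ge> 1" and "w' \<noteq> w"
  have "\<exists>\<phi>. alt_forall_sentence \<phi> \<and> real (qcount \<phi>) \<le> log 2 (length w) + 5 \<and>
          models w \<phi> \<and> \<not> models w' \<phi>"
  proof (cases "length w" "length w'" rule: linorder_cases)
    case less
    then show ?thesis
      using separate_longer[OF len(1)] by fastforce
  next
    case equal
    then show ?thesis
      using separate_same_length[OF len(1) _ \<open>w' \<noteq> w\<close>] by simp
  next
    case greater
    then show ?thesis
      using separate_shorter[OF len(2)] by fastforce
  qed
  then show "\<exists>\<phi>. sentence \<phi> \<and> prenex \<phi> \<and>
                 real (qcount \<phi>) \<le> log 2 (real (length w)) + 5 \<and>
                 strictly_alternating (qprefix \<phi>) \<and>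
                 qprefix \<phi> \<noteq> [] \<and> last (qprefix \<phi>) = QAll \<and>
                 models w \<phi> \<and> \<not> models w' \<phi>"
    by (auto simp: alt_forall_sentence_def)
qed

end
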